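(* Assume the refinement setting of the context, with $F(u)=u$, $G(u)=u$, $p\cap\overline{q}\subseteq F(p\cup q)$, $p\cap\overline{q}\subseteq\mathrm{grd}(G)$, $p\cap\overline{q}\subseteq G(q)$, and additionally $$r^{-1}[p\cap\overline{q}]\cap\mathrm{grd}(G')\subseteq F'(\mathrm{grd}(G'))\cap H(\mathrm{grd}(G')).$$ Let $p'=r^{-1}[p]$, $q'=r^{-1}[q]$, $a=p'\cap\mathrm{grd}(G')$ and $S'(s)=F'(s)\cap G'(s)\cap H(s)$. Then $a\cap\overline{q'}\subseteq S'(a\cup q')$ and $a\cap\overline{q'}\subseteq\mathrm{grd}(G')\cap G'(q')$; that is, the basic liveness property $G'\cdot\, a\gg_w q'$ holds in the concrete system $S'$.
   Context: Refinement setting: $u$ (abstract states) and $v$ (concrete states) are sets; $F,G$ are conjunctive set transformers on $u$ and $F',G',H$ conjunctive set transformers on $v$ (conjunctive = preserves intersections of nonempty families of subsets, hence monotone). $\mathrm{grd}(E)=\overline{E(\varnothing)}$. $r\subseteq v\times u$ is a total relation (every $y\in v$ is related to some $x\in u$). For $a\subseteq v$, $r[a]=\{x\in u\mid\exists y\in a,(y,x)\in r\}$; for $b\subseteq u$, $r^{-1}[b]=\{y\in v\mid\exists x\in b,(y,x)\in r\}$. Complements $\overline{\cdot}$ are taken in $u$ for subsets of $u$ and in $v$ for subsets of $v$. The refinement conditions are: for all $s\subseteq v$, $F(\overline{r[\overline{s}]})\subseteq\overline{r[\overline{F'(s)}]}$, $G(\overline{r[\overline{s}]})\subseteq\overline{r[\overline{G'(s)}]}$,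 and $\overline{r[\overline{s}]}\subseteq\overline{r[\overline{H(s)}]}$. $p,q\subseteq u$. In a system $S$ (choice of its events, $S(s)=\bigcap_i E_i(s)$), the basic liveness property (ensures) $G\cdot a\gg_w b$ for a helpful event $G$ (choice of a nonempty subfamily of the events) means $a\cap\overline{b}\subseteq S(a\cup b)$ and $a\cap\overline{b}\subseteq\mathrm{grd}(G)\cap G(b)$. *)

theory Defs
  imports Main
begin

text \<open>Set transformers on a carrier set u (subsets of u to subsets of u),
  complements taken relative to the carrier.\<close>

definition transformer_on :: "'a set \<Rightarrow> ('a set \<Rightarrow> 'a set) \<Rightarrow> bool" where
  "transformer_on u E \<longleftrightarrow> (\<forall>s \<subseteq> u. E s \<subseteq> u)"

definition conjunctive_on :: "'a set \<Rightarrow> ('a set \<Rightarrow> 'a set) \<Rightarrow> bool" where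
  "conjunctive_on u E \<longleftrightarrow> transformer_on u E \<and>
     (\<forall>X. X \<noteq> {} \<longrightarrow> (\<forall>s\<in>X. s \<subseteq> u) \<longrightarrow> E (\<Inter>X) = (\<Inter>s\<in>X. E s))"

definition grd :: "'a set \<Rightarrow> ('a set \<Rightarrow> 'a set) \<Rightarrow> 'a set" where
  "grd u E = u - E {}"

definition image_rel :: "('b \<times> 'a) set \<Rightarrow> 'b set \<Rightarrow> 'a set" where
  "image_rel r a = {x. \<exists>y\<in>a. (y, x) \<in> r}"

definition preimage_rel :: "('b \<times> 'a) set \<Rightarrow> 'a set \<Rightarrow> 'b set" where
  "preimage_rel r b = {y. \<exists>x\<in>b. (y, x) \<in> r}"

definition total_rel_on :: "'b set \<Rightarrow> 'a set \<Rightarrow> ('b \<times> 'a) set \<Rightarrow> bool" where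
  "total_rel_on v u r \<longleftrightarrow> r \<subseteq> v \<times> u \<and> (\<forall>y\<in>v. \<exists>x\<in>u. (y, x) \<in> r)"

definition ensures_w :: "'a set \<Rightarrow> ('a set \<Rightarrow> 'a set) \<Rightarrow> ('a set \<Rightarrow> 'a set) \<Rightarrow> 'a set \<Rightarrow> 'a set \<Rightarrow> bool" where
  "ensures_w u S G a b \<longleftrightarrow> a \<inter> (u - b) \<subseteq> S (a \<union> b) \<and> a \<inter> (u - b) \<subseteq> grd u G \<inter> G b"

end

theory Submission
  imports Defs
begin

text \<open>A concrete state \<open>y \<in> a - q'\<close> is represented by an abstract state \<open>x \<in> p - q\<close>.
  Since \<open>b \<subseteq> u - r[v - r\<inverse>[b]]\<close>, the refinement conditions carry \<open>x \<in> G q\<close> and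
  \<open>x \<in> F (p \<union> q)\<close> over to \<open>y \<in> G' q'\<close> and \<open>y \<in> F' (p' \<union> q')\<close>; the third condition says
  that \<open>H\<close> refines the identity and gives \<open>y \<in> H (p' \<union> q')\<close> in the same way. The
  extra hypothesis puts \<open>y\<close> into \<open>F'\<close> and \<open>H\<close> of \<open>grd G'\<close>, and by conjunctivity
  \<open>F' (p' \<union> q') \<inter> F' (grd G') = F' ((p' \<union> q') \<inter> grd G') \<subseteq> F' (a \<union> q')\<close>, likewise for \<open>H\<close>.\<close>

lemma conjunctive_on_Int:
  assumes "conjunctive_on u E" "s \<subseteq> u" "t \<subseteq> u"
  shows "E (s \<inter> t) = E s \<inter> E t"
proof -
  have "E (\<Inter>{s, t}) = (\<Inter>x\<in>{s, t}. E x)"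
    using assms(1) unfolding conjunctive_on_def
    by (elim conjE allE[where x = "{s, t}"] impE) (use assms(2,3) in auto)
  then show ?thesis by simp
qed

lemma conjunctive_on_mono:
  assumes "conjunctive_on u E" "s \<subseteq> t" "t \<subseteq> u"
  shows "E s \<subseteq> E t"
  using conjunctive_on_Int[OF assms(1), of s t] assms(2,3) by (auto simp: Int_absorb2)

lemma conjunctive_on_Int_mono:
  assumes "conjunctive_on u E" "s \<subseteq> u" "t \<subseteq> u" "s \<inter> t \<subseteq> w" "w \<subseteq> u"
  shows "E s \<inter> E t \<subseteq> E w"
  using conjunctive_on_Int[OF assms(1-3)] conjunctive_on_mono[OF assms(1,4,5)] by simp

lemma conjunctive_on_id: "conjunctive_on u id"
  by (simp add: conjunctive_on_def transformer_on_def)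

lemma subset_compl_image_rel_preimage_rel:
  "b \<subseteq> u \<Longrightarrow> b \<subseteq> u - image_rel r (v - preimage_rel r b)"
  by (auto simp: image_rel_def preimage_rel_def)

lemma refinement_preimage_rel:
  assumes cE: "conjunctive_on u E"
    and ref: "\<forall>s \<subseteq> v. E (u - image_rel r (v - s)) \<subseteq> u - image_rel r (v - E' s)"
    and r: "r \<subseteq> v \<times> u" and b: "b \<subseteq> u" and x: "x \<in> E b" and yx: "(y, x) \<in> r"
  shows "y \<in> E' (preimage_rel r b)"
proof -
  have "E b \<subseteq> E (u - image_rel r (v - preimage_rel r b))"
    using b by (intro conjunctive_on_mono[OF cE] subset_compl_image_rel_preimage_rel) auto
  also have "\<dots> \<subseteq> u - image_rel r (v - E' (preimage_rel r b))"
    using r by (intro ref[rule_format]) (auto simp: preimage_rel_def)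
  finally show ?thesis
    using x yx r by (auto simp: image_rel_def)
qed

theorem lemma6:
  fixes u :: "'a set" and v :: "'b set" and r :: "('b \<times> 'a) set"
    and F G :: "'a set \<Rightarrow> 'a set" and F' G' H :: "'b set \<Rightarrow> 'b set"
    and p q :: "'a set"
  assumes cF: "conjunctive_on u F" and cG: "conjunctive_on u G"
    and cF': "conjunctive_on v F'" and cG': "conjunctive_on v G'" and cH: "conjunctive_on v H"
    and rtot: "total_rel_on v u r"
    and refF: "\<forall>s \<subseteq> v. F (u - image_rel r (v - s)) \<subseteq> u - image_rel r (v - F' s)"
    and refG: "\<forall>s \<subseteq> v. G (u - image_rel r (v - s)) \<subseteq> u - image_rel r (v - G' s)"
    and refH: "\<forall>s \<subseteq> v. u - image_rel r (v - s) \<subseteq> u - image_rel r (v - H s)"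
    and pu: "p \<subseteq> u" and qu: "q \<subseteq> u"
    and Fu: "F u = u" and Gu: "G u = u"
    and h1: "p \<inter> (u - q) \<subseteq> F (p \<union> q)"
    and h2: "p \<inter> (u - q) \<subseteq> grd u G"
    and h3: "p \<inter> (u - q) \<subseteq> G q"
    and h4: "preimage_rel r (p \<inter> (u - q)) \<inter> grd v G' \<subseteq> F' (grd v G') \<inter> H (grd v G')"
  shows "let p' = preimage_rel r p; q' = preimage_rel r q; a = p' \<inter> grd v G';
             S' = (\<lambda>s. F' s \<inter> G' s \<inter> H s)
         in a \<inter> (v - q') \<subseteq> S' (a \<union> q') \<and> a \<inter> (v - q') \<subseteq> grd v G' \<inter> G' q'
            \<and> ensures_w v S' G' a q'"
proof -
  define p' q' g where "p' = preimage_rel r p" and "q' = preimage_rel r q" and "g = grd v G'"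
  define a where "a = p' \<inter> g"
  have r: "r \<subseteq> v \<times> u" using rtot by (simp add: total_rel_on_def)
  have pq_u: "p \<union> q \<subseteq> u" using pu qu by blast
  have p'q': "preimage_rel r (p \<union> q) = p' \<union> q'"
    by (auto simp: p'_def q'_def preimage_rel_def)
  have step: "y \<in> g \<inter> G' q' \<inter> F' (p' \<union> q') \<inter> F' g \<inter> H (p' \<union> q') \<inter> H g"
    if y: "y \<in> a \<inter> (v - q')" for y
  proof -
    obtain x where x: "x \<in> p \<inter> (u - q)" and yx: "(y, x) \<in> r"
      using y pu by (auto simp: a_def p'_def q'_def preimage_rel_def)
    have "y \<in> G' q'"
      using refinement_preimage_rel[OF cG refG r qu _ yx] h3 x unfolding q'_def by blast
    moreover have "y \<in> F' (p' \<union> q')"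
      using refinement_preimage_rel[OF cF refF r pq_u _ yx] h1 x by (auto simp: p'q')
    moreover have "y \<in> H (p' \<union> q')"
      using refinement_preimage_rel[OF conjunctive_on_id _ r pq_u _ yx, of H] refH x
      by (auto simp: p'q')
    moreover have "y \<in> g \<inter> F' g \<inter> H g"
      using h4 x yx y by (auto simp: a_def g_def preimage_rel_def)
    ultimately show ?thesis by blast
  qed
  have v: "p' \<union> q' \<subseteq> v" "g \<subseteq> v" "a \<union> q' \<subseteq> v"
    using r by (auto simp: a_def p'_def q'_def g_def preimage_rel_def grd_def)
  have pqg_a: "(p' \<union> q') \<inter> g \<subseteq> a \<union> q'"
    by (auto simp: a_def)
  have "a \<inter> (v - q') \<subseteq> F' (a \<union> q') \<inter> G' (a \<union> q') \<inter> H (a \<union> q')"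
    using step conjunctive_on_Int_mono[OF cF' v(1,2) pqg_a v(3)]
      conjunctive_on_Int_mono[OF cH v(1,2) pqg_a v(3)]
      conjunctive_on_mono[OF cG' Un_upper2 v(3)]
    by blast
  moreover have "a \<inter> (v - q') \<subseteq> grd v G' \<inter> G' q'"
    using step by (auto simp: g_def)
  ultimately show ?thesis
    unfolding Let_def ensures_w_def p'_def [symmetric] q'_def [symmetric] g_def [symmetric]
      a_def [symmetric]
    by simp
qed

end
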